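(* Let $B=F(b_1,\ldots,b_n)$ be a Ferrers board with $0\le b_1\le\cdots\le b_n$. Then, as polynomials in $x$, $$x^n=\sum_{k=0}^n\mathbf{rPT}_{n-k}(B,p,q,r)\,(x-P_{b_1}(p,q,r))(x-P_{b_2}(p,q,r))\cdots(x-P_{b_k}(p,q,r)),$$ where the empty product ($k=0$) equals 1.
   Context: For $m\ge1$, a $P$-tiling of height $m$ is a tiling of a column of height $m$ by tiles of heights 1, 2 and 3 whose bottom-most tile has height 1. $P_m(p,q,r)=\sum_T q^{\mathrm{one}(T)}p^{\mathrm{two}(T)}r^{\mathrm{three}(T)}$ over all $P$-tilings $T$ of height $m$, where $\mathrm{one},\mathrm{two},\mathrm{three}$ count tiles of height 1, 2, 3. There are no $P$-tilings of height 0 and $P_0(p,q,r)=0$. A Ferrers board $F(b_1,\ldots,b_n)$ has column heights $b_1,\ldots,b_n$ from left to right. A $P$-rook placement of $k$ tilings in $B=F(b_1,\ldots,b_n)$ is a choice of columns $1\le i_1<\cdots<i_k\le n$ with, for each $s=1,\ldots,k$, a $P$-tiling of height $b_{i_s-(s-1)}$ in column $i_s$ (the number of cells of column $i_s$ left uncanceled by earlier tilings, each tiling canceling top cells of columns to its right so that after $s$ tilings the untiled columns have $b_1,\ldots,b_{n-s}$ uncanceled cells). Its weight is $q^ap^br^c$ with $a,b,c$ the total numbers of tiles of height 1, 2, 3 used. $\mathbf{rPT}_k(B,p,q,r)$ is the sum of the weights of all $P$-rook placements of $k$ tilings in $B$ (the empty placement has weight 1). *)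

theory Defs
  imports "HOL-Computational_Algebra.Polynomial"
begin

text \<open>A P-tiling of height m: list of tile heights listed bottom to top,
  each in {1,2,3}, bottom-most tile of height 1, heights summing to m.\<close>
definition Ptilings :: "nat \<Rightarrow> nat list set" where
  "Ptilings m = {ts. ts \<noteq> [] \<and> hd ts = 1 \<and> set ts \<subseteq> {1,2,3} \<and> sum_list ts = m}"

definition tweight :: "'a::comm_ring_1 \<Rightarrow> 'a \<Rightarrow> 'a \<Rightarrow> nat list \<Rightarrow> 'a" where
  "tweight p q r ts = q ^ count_list ts 1 * p ^ count_list ts 2 * r ^ count_list ts 3"

definition Ppoly :: "nat \<Rightarrow> 'a::comm_ring_1 \<Rightarrow> 'a \<Rightarrow> 'a \<Rightarrow> 'a" where
  "Ppoly m p q r = (\<Sum>ts\<in>Ptilings m. tweight p q r ts)"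

text \<open>Board F(b_1,...,b_n) given as list bs with b_j = bs ! (j-1).
  A P-rook placement of k tilings: list of pairs (column i_s, tiling T_s), s = 0..k-1
  (0-based), columns strictly increasing in {1..n}, T_s a P-tiling of height
  b_{i_s - s} (i.e. the paper's b_{i_s-(s-1)} with 1-based s).\<close>
definition PT_placements :: "nat list \<Rightarrow> nat \<Rightarrow> (nat \<times> nat list) list set" where
  "PT_placements bs k = {pl. length pl = k \<and> sorted_wrt (<) (map fst pl) \<and>
     (\<forall>s<k. fst (pl ! s) \<in> {1..length bs} \<and>
            snd (pl ! s) \<in> Ptilings (bs ! (fst (pl ! s) - s - 1)))}"

definition rPT :: "nat \<Rightarrow> nat list \<Rightarrow> 'a::comm_ring_1 \<Rightarrow> 'a \<Rightarrow> 'a \<Rightarrow> 'a" where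
  "rPT k bs p q r = (\<Sum>pl\<in>PT_placements bs k. \<Prod>s<k. tweight p q r (snd (pl ! s)))"

end

theory Submission
  imports Defs
begin

text \<open>Restricting placements to the first \<open>n\<close> columns and deciding whether column \<open>n + 1\<close>
  carries the last tiling gives the rook-number recurrence
  \<open>R(n+1, k+1) = R(n, k+1) + P(b(n-k+1)) R(n, k)\<close>, with \<open>R(n,0) = 1\<close> and \<open>R(n,k) = 0\<close> for \<open>k > n\<close>.
  Any such triangle expands \<open>x^n\<close> in the basis \<open>(x - c_1)\<cdots>(x - c_k)\<close>: multiplying the
  expansion of \<open>x^n\<close> by \<open>x = (x - c_(k+1)) + c_(k+1)\<close> reproduces exactly the recurrence.\<close>

lemma x_times_falling_product:
  fixes c :: "nat \<Rightarrow> 'a::comm_ring_1"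
  shows "[:0, 1:] * (\<Prod>j=1..k. [:- c j, 1:]) =
           (\<Prod>j=1..Suc k. [:- c j, 1:]) + smult (c (Suc k)) (\<Prod>j=1..k. [:- c j, 1:])"
proof -
  have "[:0, 1:] = [:- c (Suc k), 1:] + [:c (Suc k):]" by simp
  then show ?thesis by (simp add: algebra_simps)
qed

lemma monom_eq_sum_falling_products:
  fixes R :: "nat \<Rightarrow> nat \<Rightarrow> 'a::comm_ring_1" and c :: "nat \<Rightarrow> 'a"
  assumes R_0: "\<And>n. R n 0 = 1"
    and R_above: "\<And>n k. n < k \<Longrightarrow> R n k = 0"
    and R_Suc: "\<And>n k. R (Suc n) (Suc k) = R n (Suc k) + c (Suc (n - k)) * R n k"
  shows "monom 1 n = (\<Sum>k=0..n. smult (R n (n - k)) (\<Prod>j=1..k. [:- c j, 1:]))"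
proof (induction n)
  case 0
  show ?case by (simp add: R_0)
next
  case (Suc n)
  define Q where "Q k = (\<Prod>j=1..k. [:- c j, 1:])" for k
  have IH: "monom 1 n = (\<Sum>k=0..n. smult (R n (n - k)) (Q k))"
    using Suc by (simp add: Q_def)
  have "monom 1 (Suc n) = [:0, 1:] * (monom 1 n :: 'a poly)"
    by (simp add: monom_Suc)
  also have "\<dots> = (\<Sum>k=0..n. smult (R n (n - k)) ([:0, 1:] * Q k))"
    unfolding IH sum_distrib_left mult_smult_right ..
  also have "\<dots> = (\<Sum>k=0..n. smult (R n (n - k)) (Q (Suc k)))
                 + (\<Sum>k=0..n. smult (R n (n - k) * c (Suc k)) (Q k))"
    unfolding Q_def x_times_falling_product smult_add_right sum.distrib smult_smult ..
  also have "(\<Sum>k=0..n. smult (R n (n - k)) (Q (Suc k)))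
             = (\<Sum>k=0..Suc n. smult (R n (Suc n - k)) (Q k))"
    unfolding sum.atLeast0_atMost_Suc_shift by (simp add: R_above)
  also have "(\<Sum>k=0..n. smult (R n (n - k) * c (Suc k)) (Q k))
             = (\<Sum>k=0..Suc n. smult (if k \<le> n then R n (n - k) * c (Suc k) else 0) (Q k))"
    unfolding sum.atLeast0_atMost_Suc by simp
  also have "(\<Sum>k=0..Suc n. smult (R n (Suc n - k)) (Q k))
             + (\<Sum>k=0..Suc n. smult (if k \<le> n then R n (n - k) * c (Suc k) else 0) (Q k))
             = (\<Sum>k=0..Suc n. smult (R (Suc n) (Suc n - k)) (Q k))"
    unfolding sum.distrib[symmetric] smult_add_left[symmetric]
  proof (rule sum.cong[OF refl])
    fix k assume "k \<in> {0..Suc n}"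
    then consider "k \<le> n" | "k = Suc n" by fastforce
    then show "smult (R n (Suc n - k) + (if k \<le> n then R n (n - k) * c (Suc k) else 0)) (Q k)
               = smult (R (Suc n) (Suc n - k)) (Q k)"
    proof cases
      case 1
      then have "Suc n - k = Suc (n - k)" "Suc (n - (n - k)) = Suc k" by auto
      then show ?thesis using 1 by (simp add: R_Suc mult.commute)
    next
      case 2
      then show ?thesis by (simp add: R_0)
    qed
  qed
  finally show ?case by (simp add: Q_def)
qed

lemma finite_Ptilings: "finite (Ptilings m)"
proof -
  have "length ts \<le> sum_list ts" if "set ts \<subseteq> {1, 2, 3::nat}" for ts
    using that by (induction ts) auto
  then have "Ptilings m \<subseteq> {ts. set ts \<subseteq> {1, 2, 3} \<and> length ts \<le> m}"
    by (auto simp: Ptilings_def)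
  then show ?thesis
    using finite_lists_length_le[of "{1::nat, 2, 3}" m] finite_subset by blast
qed

definition PT_placements_upto :: "nat list \<Rightarrow> nat \<Rightarrow> nat \<Rightarrow> (nat \<times> nat list) list set" where
  "PT_placements_upto bs n k = {pl. length pl = k \<and> sorted_wrt (<) (map fst pl) \<and>
     (\<forall>s<k. fst (pl ! s) \<in> {1..n} \<and>
            snd (pl ! s) \<in> Ptilings (bs ! (fst (pl ! s) - s - 1)))}"

lemma PT_placements_eq_upto_length: "PT_placements bs k = PT_placements_upto bs (length bs) k"
  by (simp add: PT_placements_def PT_placements_upto_def)

lemma PT_placements_upto_0: "PT_placements_upto bs n 0 = {[]}"
  by (auto simp: PT_placements_upto_def)

lemma PT_placements_upto_zero_Suc: "PT_placements_upto bs 0 (Suc k) = {}"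
  by (auto simp: PT_placements_upto_def)

lemma PT_placements_upto_Suc_snocE:
  assumes "pl \<in> PT_placements_upto bs n (Suc k)"
  obtains ys c t where "pl = ys @ [(c, t)]"
proof -
  from assms have "pl \<noteq> []"
    by (auto simp: PT_placements_upto_def)
  then show ?thesis
    using that by (metis rev_exhaust surj_pair)
qed

lemma snoc_in_PT_placements_upto_iff:
  "ys @ [(c, t)] \<in> PT_placements_upto bs n (Suc k) \<longleftrightarrow>
     ys \<in> PT_placements_upto bs (c - 1) k \<and> 1 \<le> c \<and> c \<le> n \<and> t \<in> Ptilings (bs ! (c - k - 1))"
proof -
  have less_Suc: "(\<forall>s<Suc k. P s) \<longleftrightarrow> (\<forall>s<k. P s) \<and> P k" for P
    using less_Suc_eq by auto
  have all_less: "(\<forall>x\<in>set ys. fst x < c) \<longleftrightarrow> (\<forall>s<length ys. fst (ys ! s) < c)"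
    by (metis in_set_conv_nth)
  show ?thesis
    unfolding PT_placements_upto_def mem_Collect_eq less_Suc
    by (auto simp: nth_append sorted_wrt_append all_less)
qed

text \<open>A placement in \<open>n + 1\<close> columns either avoids the last column or ends there with its
  \<open>(k+1)\<close>-st tiling, whose height is \<open>b(n+1-k)\<close>, i.e. \<open>bs ! (n - k)\<close>.\<close>

lemma PT_placements_upto_Suc:
  "PT_placements_upto bs (Suc n) (Suc k) = PT_placements_upto bs n (Suc k) \<union>
     (\<lambda>(ys, t). ys @ [(Suc n, t)]) ` (PT_placements_upto bs n k \<times> Ptilings (bs ! (n - k)))"
  (is "?lhs = ?avoid \<union> ?g ` ?A")
proof (intro equalityI subsetI)
  fix pl assume pl: "pl \<in> ?lhs"
  then obtain ys c t where pl_eq: "pl = ys @ [(c, t)]"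
    by (rule PT_placements_upto_Suc_snocE)
  show "pl \<in> ?avoid \<union> ?g ` ?A"
  proof (cases "c = Suc n")
    case True
    then show ?thesis
      using pl by (auto simp: pl_eq snoc_in_PT_placements_upto_iff intro!: image_eqI[where x="(ys, t)"])
  next
    case False
    then show ?thesis
      using pl by (simp add: pl_eq snoc_in_PT_placements_upto_iff)
  qed
next
  fix pl assume "pl \<in> ?avoid \<union> ?g ` ?A"
  then show "pl \<in> ?lhs"
  proof
    assume pl: "pl \<in> ?avoid"
    then obtain ys c t where "pl = ys @ [(c, t)]"
      by (rule PT_placements_upto_Suc_snocE)
    with pl show ?thesis by (simp add: snoc_in_PT_placements_upto_iff)
  qed (auto simp: snoc_in_PT_placements_upto_iff)
qed

lemma finite_PT_placements_upto: "finite (PT_placements_upto bs n k)"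
proof (induction n arbitrary: k)
  case 0
  then show ?case
    by (cases k) (auto simp: PT_placements_upto_0 PT_placements_upto_zero_Suc)
next
  case (Suc n)
  then show ?case
    by (cases k) (auto simp: PT_placements_upto_0 PT_placements_upto_Suc finite_Ptilings)
qed

lemma PT_placements_upto_eq_empty: "n < k \<Longrightarrow> PT_placements_upto bs n k = {}"
proof (induction n arbitrary: k)
  case 0
  then show ?case by (cases k) (auto simp: PT_placements_upto_zero_Suc)
next
  case (Suc n)
  then show ?case by (cases k) (auto simp: PT_placements_upto_Suc)
qed

definition rPT_upto :: "nat \<Rightarrow> nat list \<Rightarrow> nat \<Rightarrow> 'a \<Rightarrow> 'a \<Rightarrow> 'a \<Rightarrow> 'a::comm_ring_1" where
  "rPT_upto k bs n p q r =
     (\<Sum>pl\<in>PT_placements_upto bs n k. \<Prod>s<k. tweight p q r (snd (pl ! s)))"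

lemma rPT_eq_upto_length: "rPT k bs p q r = rPT_upto k bs (length bs) p q r"
  by (simp add: rPT_def rPT_upto_def PT_placements_eq_upto_length)

lemma rPT_upto_0: "rPT_upto 0 bs n p q r = 1"
  by (simp add: rPT_upto_def PT_placements_upto_0)

lemma rPT_upto_eq_0: "n < k \<Longrightarrow> rPT_upto k bs n p q r = 0"
  by (simp add: rPT_upto_def PT_placements_upto_eq_empty)

lemma rPT_upto_Suc:
  "rPT_upto (Suc k) bs (Suc n) p q r =
     rPT_upto (Suc k) bs n p q r + Ppoly (bs ! (n - k)) p q r * rPT_upto k bs n p q r"
proof -
  let ?w = "\<lambda>pl. \<Prod>s<Suc k. tweight p q r (snd (pl ! s))"
  let ?g = "\<lambda>(ys, t). ys @ [(Suc n, t)]"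
  let ?A = "PT_placements_upto bs n k \<times> Ptilings (bs ! (n - k))"
  have disjoint: "PT_placements_upto bs n (Suc k) \<inter> ?g ` ?A = {}"
    by (auto simp: snoc_in_PT_placements_upto_iff)
  have "rPT_upto (Suc k) bs (Suc n) p q r = sum ?w (PT_placements_upto bs n (Suc k)) + sum ?w (?g ` ?A)"
    unfolding rPT_upto_def PT_placements_upto_Suc
    by (rule sum.union_disjoint) (use disjoint in \<open>auto simp: finite_PT_placements_upto finite_Ptilings\<close>)
  also have "sum ?w (?g ` ?A) = sum (?w \<circ> ?g) ?A"
    by (rule sum.reindex) (auto simp: inj_on_def)
  also have "\<dots> = (\<Sum>(ys, t)\<in>?A. (\<Prod>s<k. tweight p q r (snd (ys ! s))) * tweight p q r t)"
  proof (rule sum.cong[OF refl], clarify)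
    fix ys t assume "ys \<in> PT_placements_upto bs n k"
    then have "length ys = k" by (simp add: PT_placements_upto_def)
    then show "(?w \<circ> ?g) (ys, t) = (\<Prod>s<k. tweight p q r (snd (ys ! s))) * tweight p q r t"
      by (simp add: nth_append)
  qed
  also have "\<dots> = rPT_upto k bs n p q r * Ppoly (bs ! (n - k)) p q r"
    unfolding rPT_upto_def Ppoly_def sum_product sum.cartesian_product
    by (simp add: case_prod_beta)
  finally show ?thesis
    by (simp add: rPT_upto_def mult.commute)
qed

theorem theorem8:
  fixes bs :: "nat list" and p q r :: "'a::comm_ring_1"
  assumes "sorted bs"
  shows "(monom 1 (length bs) :: 'a poly) =
    (\<Sum>k=0..length bs. smult (rPT (length bs - k) bs p q r)
        (\<Prod>j=1..k. [:- Ppoly (bs ! (j - 1)) p q r, 1:]))"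
proof -
  let ?R = "\<lambda>n k. rPT_upto k bs n p q r" and ?c = "\<lambda>j. Ppoly (bs ! (j - 1)) p q r"
  have "?R (Suc n) (Suc k) = ?R n (Suc k) + ?c (Suc (n - k)) * ?R n k" for n k
    by (simp add: rPT_upto_Suc)
  then have "monom 1 (length bs) =
      (\<Sum>k=0..length bs. smult (?R (length bs) (length bs - k)) (\<Prod>j=1..k. [:- ?c j, 1:]))"
    using monom_eq_sum_falling_products[of ?R ?c] rPT_upto_0 rPT_upto_eq_0 by blast
  then show ?thesis
    by (simp add: rPT_eq_upto_length)
qed

end
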